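(* Let $\overrightarrow{U}(t)$ be a closed unit timelike dual curve in the 3-dimensional dual Lorentzian space with dual Frenet frame $\{\overrightarrow{U_1},\overrightarrow{U_2},\overrightarrow{U_3}\}$, dual curvature $\kappa$ and dual torsion $\tau$, let $\Phi=\varphi+\varepsilon\varphi^*$ be a constant dual number, let $(V_1)$ be the parallel ruled surface of $(U_1)$, corresponding to $\overrightarrow{V_1}=\cosh\Phi\,\overrightarrow{U_1}+\sinh\Phi\,\overrightarrow{U_3}$, and let $(V_3)$ be the closed ruled surface corresponding to $\overrightarrow{V_3}=-\sinh\Phi\,\overrightarrow{U_1}-\cosh\Phi\,\overrightarrow{U_3}$. With $P=p+\varepsilon p^*=\kappa\cosh\Phi+\tau\sinh\Phi$ and $Q=q+\varepsilon q^*=-\kappa\sinh\Phi-\tau\cosh\Phi$, the pitch, the dual angle of pitch and the drall of $(V_3)$ are $$L_{V_3}=\oint p^*\,dt,\qquad \Lambda_{V_3}=-\oint P\,dt,\qquad P_{V_3}=\frac{q^*}{q}.$$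
   Context: Dual numbers are $\lambda+\varepsilon\lambda^*$ with $\lambda,\lambda^*\in\mathbb{R}$ and $\varepsilon^2=0$; dual vectors are $\overrightarrow{A}=\overrightarrow{a}+\varepsilon\overrightarrow{a}^*$ with $\overrightarrow{a},\overrightarrow{a}^*\in\mathbb{R}^3$. The Lorentzian inner product on $\mathbb{R}^3$ is $\langle a,b\rangle=-a_1b_1+a_2b_2+a_3b_3$, extended to dual vectors by $\langle \overrightarrow{A},\overrightarrow{B}\rangle=\langle\overrightarrow{a},\overrightarrow{b}\rangle+\varepsilon(\langle\overrightarrow{a},\overrightarrow{b}^*\rangle+\langle\overrightarrow{a}^*,\overrightarrow{b}\rangle)$. For a dual number $\Phi=\varphi+\varepsilon\varphi^*$: $\sinh\Phi=\sinh\varphi+\varepsilon\varphi^*\cosh\varphi$, $\cosh\Phi=\cosh\varphi+\varepsilon\varphi^*\sinh\varphi$. The closed unit timelike dual curve $\overrightarrow{U}(t)$ (integrals $\oint$ over one closed period of $t$) has Frenet frame $\overrightarrow{U_1}=\overrightarrow{U}$ (timelike), $\overrightarrow{U_2},\overrightarrow{U_3}$ (spacelike), mutually orthogonal unit dual vectors, satisfying $\overrightarrow{U_1}'=\kappa\overrightarrow{U_2}$, $\overrightarrow{U_2}'=\kappa\overrightarrow{U_1}-\tau\overrightarrow{U_3}$, $\overrightarrow{U_3}'=\tau\overrightarrow{U_2}$. Set $\overrightarrow{V_2}=\overrightarrow{U_2}$; then $\overrightarrow{V_1}'=P\overrightarrow{V_2}$, $\overrightarrow{V_2}'=P\overrightarrow{V_1}-Q\overrightarrow{V_3}$,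 $\overrightarrow{V_3}'=Q\overrightarrow{V_2}$. Write $\overrightarrow{V_i}=\overrightarrow{v_i}+\varepsilon\overrightarrow{v_i}^*$. The dual Steiner vector is taken (frame vectors written outside the integrals) as $\overrightarrow{D}=\overrightarrow{d}+\varepsilon\overrightarrow{d}^*=\overrightarrow{U_1}\oint\tau\,dt-\overrightarrow{U_3}\oint\kappa\,dt=-\overrightarrow{V_1}\oint Q\,dt+\overrightarrow{V_3}\oint P\,dt$, so $\overrightarrow{d}=-\overrightarrow{v_1}\oint q\,dt+\overrightarrow{v_3}\oint p\,dt$, $\overrightarrow{d}^*=-\overrightarrow{v_1}\oint q^*dt-\overrightarrow{v_1}^*\oint q\,dt+\overrightarrow{v_3}\oint p^*dt+\overrightarrow{v_3}^*\oint p\,dt$. For the closed ruled surface corresponding to a unit dual curve $\overrightarrow{X}=\overrightarrow{x}+\varepsilon\overrightarrow{x}^*$: pitch $L_X=\langle\overrightarrow{d},\overrightarrow{x}^*\rangle+\langle\overrightarrow{d}^*,\overrightarrow{x}\rangle$, dual angle of pitch $\Lambda_X=-\langle\overrightarrow{D},\overrightarrow{X}\rangle$, drall $P_X=\langle d\overrightarrow{x},d\overrightarrow{x}^*\rangle/\langle d\overrightarrow{x},d\overrightarrow{x}\rangle$. *)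

theory Defs
  imports "HOL-Analysis.Analysis"
begin

text \<open>Dual numbers  lambda + eps lambda*  are pairs (lambda, lambda*);
  dual vectors  a + eps a*  are pairs (a, a*) of vectors of R^3.\<close>

type_synonym dnum = "real \<times> real"
type_synonym dvec = "(real^3) \<times> (real^3)"

definition dadd :: "dnum \<Rightarrow> dnum \<Rightarrow> dnum" where
  "dadd x y = (fst x + fst y, snd x + snd y)"

definition dneg :: "dnum \<Rightarrow> dnum" where
  "dneg x = (- fst x, - snd x)"

definition dmul :: "dnum \<Rightarrow> dnum \<Rightarrow> dnum" where
  "dmul x y = (fst x * fst y, fst x * snd y + snd x * fst y)"

definition dsinh :: "dnum \<Rightarrow> dnum" where
  "dsinh x = (sinh (fst x), snd x * cosh (fst x))"

definition dcosh :: "dnum \<Rightarrow> dnum" where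
  "dcosh x = (cosh (fst x), snd x * sinh (fst x))"

definition dvadd :: "dvec \<Rightarrow> dvec \<Rightarrow> dvec" where
  "dvadd A B = (fst A + fst B, snd A + snd B)"

definition dvneg :: "dvec \<Rightarrow> dvec" where
  "dvneg A = (- fst A, - snd A)"

definition dscale :: "dnum \<Rightarrow> dvec \<Rightarrow> dvec" where
  "dscale l A = (fst l *\<^sub>R fst A, fst l *\<^sub>R snd A + snd l *\<^sub>R fst A)"

definition linner :: "real^3 \<Rightarrow> real^3 \<Rightarrow> real" where
  "linner a b = - (a$1 * b$1) + a$2 * b$2 + a$3 * b$3"

definition dinner :: "dvec \<Rightarrow> dvec \<Rightarrow> dnum" where
  "dinner A B = (linner (fst A) (fst B),
                 linner (fst A) (snd B) + linner (snd A) (fst B))"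

definition has_dvec_derivative :: "(real \<Rightarrow> dvec) \<Rightarrow> dvec \<Rightarrow> real \<Rightarrow> bool" where
  "has_dvec_derivative X X' t \<longleftrightarrow>
     ((\<lambda>s. fst (X s)) has_vector_derivative fst X') (at t) \<and>
     ((\<lambda>s. snd (X s)) has_vector_derivative snd X') (at t)"

text \<open>Closed integral over one period [0, T] of a dual-number valued function.\<close>
definition dint :: "real \<Rightarrow> (real \<Rightarrow> dnum) \<Rightarrow> dnum" where
  "dint T f = (integral {0..T} (\<lambda>s. fst (f s)), integral {0..T} (\<lambda>s. snd (f s)))"

text \<open>Dual Steiner vector at parameter t (frame vectors outside the integrals):
  D = U1 * oint tau - U3 * oint kappa.\<close>
definition steiner :: "real \<Rightarrow> (real \<Rightarrow> dnum) \<Rightarrow> (real \<Rightarrow> dnum)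
    \<Rightarrow> (real \<Rightarrow> dvec) \<Rightarrow> (real \<Rightarrow> dvec) \<Rightarrow> real \<Rightarrow> dvec" where
  "steiner T \<kappa> \<tau> U1 U3 t =
     dvadd (dscale (dint T \<tau>) (U1 t)) (dvneg (dscale (dint T \<kappa>) (U3 t)))"

definition pitch :: "dvec \<Rightarrow> dvec \<Rightarrow> real" where
  "pitch D X = linner (fst D) (snd X) + linner (snd D) (fst X)"

definition angle_of_pitch :: "dvec \<Rightarrow> dvec \<Rightarrow> dnum" where
  "angle_of_pitch D X = dneg (dinner D X)"

definition drall :: "(real \<Rightarrow> dvec) \<Rightarrow> real \<Rightarrow> real" where
  "drall X t =
     (let dx = vector_derivative (\<lambda>s. fst (X s)) (at t);
          dxs = vector_derivative (\<lambda>s. snd (X s)) (at t)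
      in linner dx dxs / linner dx dx)"

end

theory Submission
  imports Defs
begin

text \<open>The Steiner vector has the frame vectors outside the integrals, so at each parameter
  value it is a constant dual combination of \<open>U\<^sub>1\<close> and \<open>U\<^sub>3\<close>, while \<open>V\<^sub>3\<close> is another such
  combination. Since \<open>U\<^sub>1, U\<^sub>3\<close> form a timelike-spacelike orthonormal pair,
  \<open>\<langle>D, V\<^sub>3\<rangle> = \<oint>\<kappa> cosh \<Phi> + \<oint>\<tau> sinh \<Phi> = \<oint>P\<close>, which gives the dual angle of pitch and, as its
  dual part, the pitch. By the Frenet equations \<open>V\<^sub>3' = Q U\<^sub>2\<close>, and for a curve whose
  derivative is a dual multiple \<open>Q\<close> of a unit vector the drall is \<open>q\<^sup>*/q\<close>.\<close>

lemma linner_commute: "linner a b = linner b a"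
  unfolding linner_def by (simp add: mult.commute)

lemma linner_add_left [simp]: "linner (x + y) z = linner x z + linner y z"
  and linner_add_right [simp]: "linner z (x + y) = linner z x + linner z y"
  and linner_scaleR_left [simp]: "linner (c *\<^sub>R x) z = c * linner x z"
  and linner_scaleR_right [simp]: "linner z (c *\<^sub>R x) = c * linner z x"
  unfolding linner_def by (simp_all add: algebra_simps)

lemma dinner_dvadd_left: "dinner (dvadd A B) C = dadd (dinner A C) (dinner B C)"
  and dinner_dvadd_right: "dinner C (dvadd A B) = dadd (dinner C A) (dinner C B)"
  and dinner_dscale_left: "dinner (dscale a A) B = dmul a (dinner A B)"
  and dinner_dscale_right: "dinner A (dscale a B) = dmul a (dinner A B)"
  unfolding dinner_def dvadd_def dadd_def dscale_def dmul_def by (simp_all add: algebra_simps)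

lemma dvneg_dscale: "dvneg (dscale a A) = dscale (dneg a) A"
  unfolding dvneg_def dscale_def dneg_def by simp

lemma dinner_timelike_spacelike_combination:
  assumes "dinner E1 E1 = (-1, 0)" "dinner E3 E3 = (1, 0)" "dinner E1 E3 = (0, 0)"
  shows "dinner (dvadd (dscale a E1) (dscale b E3)) (dvadd (dscale c E1) (dscale d E3))
           = dadd (dneg (dmul a c)) (dmul b d)"
proof -
  have "dinner E3 E1 = (0, 0)"
    using assms(3) unfolding dinner_def by (simp add: linner_commute add.commute)
  then show ?thesis
    using assms
    by (simp add: dinner_dvadd_left dinner_dvadd_right dinner_dscale_left dinner_dscale_right)
       (simp add: dadd_def dmul_def dneg_def algebra_simps)
qed

lemma pitch_eq_snd_dinner: "pitch D X = snd (dinner D X)"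
  unfolding pitch_def dinner_def by simp

lemma dint_dadd:
  assumes "(\<lambda>s. fst (f s)) integrable_on {0..T}" "(\<lambda>s. snd (f s)) integrable_on {0..T}"
    and "(\<lambda>s. fst (g s)) integrable_on {0..T}" "(\<lambda>s. snd (g s)) integrable_on {0..T}"
  shows "dint T (\<lambda>s. dadd (f s) (g s)) = dadd (dint T f) (dint T g)"
  using assms unfolding dint_def dadd_def by (simp add: integral_add)

lemma dint_dmul_right:
  assumes "(\<lambda>s. fst (f s)) integrable_on {0..T}" "(\<lambda>s. snd (f s)) integrable_on {0..T}"
  shows "dint T (\<lambda>s. dmul (f s) c) = dmul (dint T f) c"
  using assms unfolding dint_def dmul_def by (simp add: integral_add integrable_on_mult_left)

lemma has_dvec_derivative_dvadd:
  assumes "has_dvec_derivative X X' t" "has_dvec_derivative Y Y' t"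
  shows "has_dvec_derivative (\<lambda>s. dvadd (X s) (Y s)) (dvadd X' Y') t"
  using assms unfolding has_dvec_derivative_def dvadd_def by (auto intro!: derivative_eq_intros)

lemma has_dvec_derivative_dscale:
  assumes "has_dvec_derivative X X' t"
  shows "has_dvec_derivative (\<lambda>s. dscale c (X s)) (dscale c X') t"
  using assms unfolding has_dvec_derivative_def dscale_def by (auto intro!: derivative_eq_intros)

text \<open>If \<open>c = 0\<close> both sides are \<open>0\<close>, by the conventions \<open>x / 0 = 0\<close>.\<close>
lemma drall_derivative_along_nonnull:
  assumes "has_dvec_derivative X (dscale c E) t" "dinner E E = (e, 0)" "e \<noteq> 0"
  shows "drall X t = snd c / fst c"
proof -
  have "linner (fst E) (fst E) = e" "linner (fst E) (snd E) = 0"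
    using assms(2) unfolding dinner_def by (auto simp: linner_commute[of "snd E"])
  moreover have "vector_derivative (\<lambda>s. fst (X s)) (at t) = fst c *\<^sub>R fst E"
    "vector_derivative (\<lambda>s. snd (X s)) (at t) = fst c *\<^sub>R snd E + snd c *\<^sub>R fst E"
    using assms(1) unfolding has_dvec_derivative_def dscale_def
    by (simp_all add: vector_derivative_at)
  ultimately show ?thesis
    using assms(3) unfolding drall_def Let_def by (simp add: power2_eq_square field_simps)
qed

theorem theorem2p3:
  fixes U1 U2 U3 :: "real \<Rightarrow> dvec"
    and \<kappa> \<tau> :: "real \<Rightarrow> dnum"
    and \<Phi> :: dnum
    and T :: real
    and V1 V3 :: "real \<Rightarrow> dvec"
    and P Q :: "real \<Rightarrow> dnum"
    and D :: "real \<Rightarrow> dvec"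
  assumes T_pos: "T > 0"
    and closed: "\<And>t. U1 (t + T) = U1 t" "\<And>t. U2 (t + T) = U2 t" "\<And>t. U3 (t + T) = U3 t"
                "\<And>t. \<kappa> (t + T) = \<kappa> t" "\<And>t. \<tau> (t + T) = \<tau> t"
    and cont: "continuous_on UNIV (\<lambda>t. fst (\<kappa> t))" "continuous_on UNIV (\<lambda>t. snd (\<kappa> t))"
              "continuous_on UNIV (\<lambda>t. fst (\<tau> t))" "continuous_on UNIV (\<lambda>t. snd (\<tau> t))"
    and frame: "\<And>t. dinner (U1 t) (U1 t) = (-1, 0)"
               "\<And>t. dinner (U2 t) (U2 t) = (1, 0)"
               "\<And>t. dinner (U3 t) (U3 t) = (1, 0)"
               "\<And>t. dinner (U1 t) (U2 t) = (0, 0)"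
               "\<And>t. dinner (U1 t) (U3 t) = (0, 0)"
               "\<And>t. dinner (U2 t) (U3 t) = (0, 0)"
    and frenet: "\<And>t. has_dvec_derivative U1 (dscale (\<kappa> t) (U2 t)) t"
                "\<And>t. has_dvec_derivative U2
                       (dvadd (dscale (\<kappa> t) (U1 t)) (dvneg (dscale (\<tau> t) (U3 t)))) t"
                "\<And>t. has_dvec_derivative U3 (dscale (\<tau> t) (U2 t)) t"
    and V1_def: "V1 = (\<lambda>t. dvadd (dscale (dcosh \<Phi>) (U1 t)) (dscale (dsinh \<Phi>) (U3 t)))"
    and V3_def: "V3 = (\<lambda>t. dvadd (dscale (dneg (dsinh \<Phi>)) (U1 t)) (dscale (dneg (dcosh \<Phi>)) (U3 t)))"
    and P_def: "P = (\<lambda>t. dadd (dmul (\<kappa> t) (dcosh \<Phi>)) (dmul (\<tau> t) (dsinh \<Phi>)))"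
    and Q_def: "Q = (\<lambda>t. dadd (dneg (dmul (\<kappa> t) (dsinh \<Phi>))) (dneg (dmul (\<tau> t) (dcosh \<Phi>))))"
    and D_def: "D = steiner T \<kappa> \<tau> U1 U3"
  shows "\<forall>t. pitch (D t) (V3 t) = integral {0..T} (\<lambda>s. snd (P s))
           \<and> angle_of_pitch (D t) (V3 t) = dneg (dint T P)
           \<and> drall V3 t = snd (Q t) / fst (Q t)"
proof (intro allI)
  fix t
  have integrable: "(\<lambda>s. fst (\<kappa> s)) integrable_on {0..T}" "(\<lambda>s. snd (\<kappa> s)) integrable_on {0..T}"
    "(\<lambda>s. fst (\<tau> s)) integrable_on {0..T}" "(\<lambda>s. snd (\<tau> s)) integrable_on {0..T}"
    using cont by (meson continuous_on_subset integrable_continuous_interval subset_UNIV)+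
  have "dint T P = dadd (dmul (dint T \<kappa>) (dcosh \<Phi>)) (dmul (dint T \<tau>) (dsinh \<Phi>))"
    unfolding P_def using integrable
    by (simp add: dint_dadd dmul_def integrable_on_mult_left integrable_add
        dint_dmul_right[unfolded dmul_def])
  moreover have "dinner (D t) (V3 t)
      = dadd (dneg (dmul (dint T \<tau>) (dneg (dsinh \<Phi>)))) (dmul (dneg (dint T \<kappa>)) (dneg (dcosh \<Phi>)))"
    unfolding D_def steiner_def V3_def dvneg_dscale
    using frame(1,3,5) by (rule dinner_timelike_spacelike_combination)
  ultimately have inner_D_V3: "dinner (D t) (V3 t) = dint T P"
    by (simp add: dadd_def dmul_def dneg_def algebra_simps)
  have "has_dvec_derivative V3
      (dvadd (dscale (dneg (dsinh \<Phi>)) (dscale (\<kappa> t) (U2 t)))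
             (dscale (dneg (dcosh \<Phi>)) (dscale (\<tau> t) (U2 t)))) t"
    unfolding V3_def by (intro has_dvec_derivative_dvadd has_dvec_derivative_dscale frenet)
  moreover have "dvadd (dscale (dneg (dsinh \<Phi>)) (dscale (\<kappa> t) (U2 t)))
      (dscale (dneg (dcosh \<Phi>)) (dscale (\<tau> t) (U2 t))) = dscale (Q t) (U2 t)"
    unfolding Q_def dvadd_def dscale_def dadd_def dmul_def dneg_def
    by (simp add: algebra_simps)
  ultimately have "has_dvec_derivative V3 (dscale (Q t) (U2 t)) t"
    by simp
  then have "drall V3 t = snd (Q t) / fst (Q t)"
    using frame(2) by (rule drall_derivative_along_nonnull) simp
  then show "pitch (D t) (V3 t) = integral {0..T} (\<lambda>s. snd (P s))
           \<and> angle_of_pitch (D t) (V3 t) = dneg (dint T P)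
           \<and> drall V3 t = snd (Q t) / fst (Q t)"
    by (simp add: pitch_eq_snd_dinner angle_of_pitch_def inner_D_V3 dint_def)
qed

end
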